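(* Consider the decoupled midpoint–Newmark-$\beta$ method described in the context, with $\gamma=1/2$ and no external field, and assume that at every step $i\ge1$ the extrapolation $\hat{\mathbf{m}}_h^{i+1/2}$ is nonzero at all nodes $z\in\mathcal{N}_h$ (so all iterates are well defined). Then for each $j\ge2$, \[ \|\nabla\mathbf{m}_h^{j}\|^2 + k\sum_{i=1}^{j-1}\|\mathbf{v}_h^{i+1}\|^2 \lesssim \|\nabla\mathbf{m}_h^{1}\|^2 + k\sum_{i=0}^{j-1}\left(1+\|\boldsymbol{\varepsilon}(\mathbf{u}_h^{i})\|^2\right), \] where the hidden constant depends on the problem data but is independent of $h$ and $k$.
   Context: Let $\Omega\subset\mathbb{R}^3$ be a bounded polyhedral Lipschitz domain whose boundary is split into disjoint relatively open parts $\Gamma_D$ (of positive surface measure) and $\Gamma_N$ with $\partial\Omega=\overline{\Gamma}_D\cup\overline{\Gamma}_N$. Let $\mathcal{T}_h$ be a tetrahedral mesh of $\Omega$ with mesh size $h$ and node set $\mathcal{N}_h$; $\mathcal{S}^1(\mathcal{T}_h)$ is the space of globally continuous, piecewise affine functions, and $\mathcal{S}^1_D(\mathcal{T}_h)$ the subspace of those vanishing on $\Gamma_D$. $(\cdot,\cdot)$ and $\|\cdot\|$ denote the $L^2(\Omega)$ inner product and norm. For $\boldsymbol{\varphi}_h\in\mathcal{S}^1(\mathcal{T}_h)^3$ nonvanishing at all nodes, $\Pi_h\boldsymbol{\varphi}_h\in\mathcal{S}^1(\mathcal{T}_h)^3$ is defined by $\Pi_h\boldsymbol{\varphi}_h(z)=\boldsymbol{\varphi}_h(z)/|\boldsymbol{\varphi}_h(z)|$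 for $z\in\mathcal{N}_h$. For $\mathbf{m}_h\in\mathcal{S}^1(\mathcal{T}_h)^3$, $\mathbb{K}_h[\mathbf{m}_h]=\{\boldsymbol{\psi}_h\in\mathcal{S}^1(\mathcal{T}_h)^3:\mathbf{m}_h(z)\cdot\boldsymbol{\psi}_h(z)=0\ \forall z\in\mathcal{N}_h\}$, and $\mathcal{M}_{h,0}=\{\boldsymbol{\varphi}_h\in\mathcal{S}^1(\mathcal{T}_h)^3: |\boldsymbol{\varphi}_h(z)|=1\ \forall z\in\mathcal{N}_h\}$. Tensors: $\mathbb{Z}\in\mathbb{R}^{3^4}$ is a constant magnetostriction tensor with minor symmetry; $\mathbb{C}\in\mathbb{R}^{3^4}$ is a constant elasticity tensor, fully symmetric (major and minor symmetry) and uniformly positive definite. For a fourth-order tensor $\mathbb{A}$ and matrix $A$, $(\mathbb{A}:A)_{ij}=\sum_{k,\ell}\mathbb{A}_{ijk\ell}A_{k\ell}$; $(\mathbb{A}^\top)_{ijk\ell}=\mathbb{A}_{k\ell ij}$; $(\mathbf{a}\otimes\mathbf{b})_{ij}=a_ib_j$. Set $\boldsymbol{\varepsilon}(\mathbf{u})=(\nabla\mathbf{u}+\nabla\mathbf{u}^\top)/2$, $\boldsymbol{\varepsilon}_{\mathrm m}(\mathbf{m})=\mathbb{Z}:(\mathbf{m}\otimes\mathbf{m})$, $\boldsymbol{\sigma}[\mathbf{u},\mathbf{m}]=\mathbb{C}:(\boldsymbol{\varepsilon}(\mathbf{u})-\boldsymbol{\varepsilon}_{\mathrm m}(\mathbf{m}))$,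 and $\|A\|_{\mathbb{C}}^2=(\mathbb{C}:A,A)$. The vector $2\mathbb{Z}^\top:\boldsymbol{\sigma}[\mathbf{u},\mathbf{m}]\mathbf{m}$ denotes the matrix $2\mathbb{Z}^\top:\boldsymbol{\sigma}[\mathbf{u},\mathbf{m}]$ applied to $\mathbf{m}$. $\alpha>0$ is the Gilbert damping constant. Time discretization: $T>0$, $N\in\mathbb{N}$, $k=T/N$. $d_t\boldsymbol{\varphi}^i=(\boldsymbol{\varphi}^i-\boldsymbol{\varphi}^{i-1})/k$; $d_t^2\boldsymbol{\varphi}^{i+1}=(\boldsymbol{\varphi}^{i+1}-2\boldsymbol{\varphi}^i+\boldsymbol{\varphi}^{i-1})/k^2$ for $i\ge1$, and $d_t^2\mathbf{u}_h^1=(\mathbf{u}_h^1-\mathbf{u}_h^0-k\dot{\mathbf{u}}_h^0)/k^2$; $\hat{\boldsymbol{\varphi}}^{i+1/2}=\tfrac32\boldsymbol{\varphi}^i-\tfrac12\boldsymbol{\varphi}^{i-1}$. Method (parameters $\beta\in[0,1/2]$, $\gamma=1/2$, zero external field). Input: $\mathbf{m}_h^0\in\mathcal{M}_{h,0}$, $\mathbf{u}_h^0\in\mathcal{S}^1_D(\mathcal{T}_h)^3$, $\dot{\mathbf{u}}_h^0\in\mathcal{S}^1(\mathcal{T}_h)^3$. Initialization: (1) find $\mathbf{v}_h^1\in\mathbb{K}_h[\mathbf{m}_h^0]$ with $\alpha(\mathbf{v}_h^1,\boldsymbol{\varphi}_h)+(\mathbf{m}_h^0\times\mathbf{v}_h^1,\boldsymbol{\varphi}_h)+\tfrac{k}{2}(\nabla\mathbf{v}_h^1,\nabla\boldsymbol{\varphi}_h)=-(\nabla\mathbf{m}_h^0,\nabla\boldsymbol{\varphi}_h)+(2\mathbb{Z}^\top:\boldsymbol{\sigma}[\mathbf{u}_h^0,\mathbf{m}_h^0]\mathbf{m}_h^0,\boldsymbol{\varphi}_h)$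 for all $\boldsymbol{\varphi}_h\in\mathbb{K}_h[\mathbf{m}_h^0]$, and set $\mathbf{m}_h^1=\mathbf{m}_h^0+k\mathbf{v}_h^1$. (2) find $\mathbf{u}_h^1\in\mathcal{S}^1_D(\mathcal{T}_h)^3$ with $(d_t^2\mathbf{u}_h^1,\boldsymbol{\psi}_h)+\beta(\mathbb{C}:\boldsymbol{\varepsilon}(\mathbf{u}_h^1),\boldsymbol{\varepsilon}(\boldsymbol{\psi}_h))=-(\tfrac12-\beta)(\boldsymbol{\sigma}[\mathbf{u}_h^0,\mathbf{m}_h^0],\boldsymbol{\varepsilon}(\boldsymbol{\psi}_h))+\beta(\mathbb{C}:\boldsymbol{\varepsilon}_{\mathrm m}(\Pi_h\mathbf{m}_h^1),\boldsymbol{\varepsilon}(\boldsymbol{\psi}_h))$ for all $\boldsymbol{\psi}_h\in\mathcal{S}^1_D(\mathcal{T}_h)^3$. Loop, $i=1,\dots,N-1$: (i) find $\mathbf{v}_h^{i+1}\in\mathbb{K}_h[\hat{\mathbf{m}}_h^{i+1/2}]$ with $\alpha(\mathbf{v}_h^{i+1},\boldsymbol{\varphi}_h)+(\hat{\mathbf{m}}_h^{i+1/2}\times\mathbf{v}_h^{i+1},\boldsymbol{\varphi}_h)+\tfrac{k}{2}(\nabla\mathbf{v}_h^{i+1},\nabla\boldsymbol{\varphi}_h)=-(\nabla\mathbf{m}_h^i,\nabla\boldsymbol{\varphi}_h)+(2\mathbb{Z}^\top:\boldsymbol{\sigma}[\hat{\mathbf{u}}_h^{i+1/2},\Pi_h\hat{\mathbf{m}}_h^{i+1/2}]\Pi_h\hat{\mathbf{m}}_h^{i+1/2},\boldsymbol{\varphi}_h)$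 for all $\boldsymbol{\varphi}_h\in\mathbb{K}_h[\hat{\mathbf{m}}_h^{i+1/2}]$, and set $\mathbf{m}_h^{i+1}=\mathbf{m}_h^i+k\mathbf{v}_h^{i+1}$; (ii) find $\mathbf{u}_h^{i+1}\in\mathcal{S}^1_D(\mathcal{T}_h)^3$ with $(d_t^2\mathbf{u}_h^{i+1},\boldsymbol{\psi}_h)+\beta(\mathbb{C}:\boldsymbol{\varepsilon}(\mathbf{u}_h^{i+1}),\boldsymbol{\varepsilon}(\boldsymbol{\psi}_h))=-(1-2\beta)(\boldsymbol{\sigma}[\mathbf{u}_h^i,\Pi_h\mathbf{m}_h^i],\boldsymbol{\varepsilon}(\boldsymbol{\psi}_h))-\beta(\boldsymbol{\sigma}[\mathbf{u}_h^{i-1},\Pi_h\mathbf{m}_h^{i-1}],\boldsymbol{\varepsilon}(\boldsymbol{\psi}_h))+\beta(\mathbb{C}:\boldsymbol{\varepsilon}_{\mathrm m}(\Pi_h\mathbf{m}_h^{i+1}),\boldsymbol{\varepsilon}(\boldsymbol{\psi}_h))$ for all $\boldsymbol{\psi}_h\in\mathcal{S}^1_D(\mathcal{T}_h)^3$. Notation: $a\lesssim b$ means $a\le Cb$ with $C>0$ independent of $h$ and $k$. *)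

theory Defs
  imports "HOL-Analysis.Analysis"
begin

type_synonym pt = "real^3"
type_synonym mat3 = "real^3^3"
type_synonym tensor4 = "3 \<Rightarrow> 3 \<Rightarrow> 3 \<Rightarrow> 3 \<Rightarrow> real"
type_synonym vfield = "real^3 \<Rightarrow> real^3"

definition lipschitz_domain :: "pt set \<Rightarrow> bool" where
  "lipschitz_domain \<Omega> \<longleftrightarrow> open \<Omega> \<and> bounded \<Omega> \<and> connected \<Omega> \<and> \<Omega> \<noteq> {} \<and>
    (\<forall>p\<in>frontier \<Omega>. \<exists>r>0. \<exists>Q L (g::real \<Rightarrow> real \<Rightarrow> real).
       orthogonal_transformation (Q :: pt \<Rightarrow> pt) \<and>
       (\<forall>s1 t1 s2 t2. \<bar>g s1 t1 - g s2 t2\<bar> \<le> L * dist (s1, t1) (s2, t2)) \<and>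
       \<Omega> \<inter> ball p r = {x \<in> ball p r. g (Q x $ 1) (Q x $ 2) < Q x $ 3})"

definition polyhedral_domain :: "pt set \<Rightarrow> bool" where
  "polyhedral_domain \<Omega> \<longleftrightarrow>
     (\<exists>\<P>. finite \<P> \<and> (\<forall>P\<in>\<P>. polytope P) \<and> closure \<Omega> = \<Union>\<P>)"

text \<open>Splitting of the boundary into disjoint relatively open parts; positive surface
measure of \<Gamma>_D is rendered as nonemptiness.\<close>
definition boundary_split :: "pt set \<Rightarrow> pt set \<Rightarrow> pt set \<Rightarrow> bool" where
  "boundary_split \<Omega> \<Gamma>D \<Gamma>N \<longleftrightarrow>
     openin (top_of_set (frontier \<Omega>)) \<Gamma>D \<and> openin (top_of_set (frontier \<Omega>)) \<Gamma>N \<and>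
     \<Gamma>D \<inter> \<Gamma>N = {} \<and> frontier \<Omega> = closure \<Gamma>D \<union> closure \<Gamma>N \<and> \<Gamma>D \<noteq> {}"

text \<open>A mesh is a finite set of vertex sets of (nondegenerate) tetrahedra; elements are
their convex hulls.\<close>
definition tetra :: "pt set \<Rightarrow> bool" where
  "tetra V \<longleftrightarrow> finite V \<and> card V = 4 \<and> \<not> affine_dependent V"

definition tet_mesh :: "pt set set \<Rightarrow> pt set \<Rightarrow> bool" where
  "tet_mesh \<T> \<Omega> \<longleftrightarrow> finite \<T> \<and> \<T> \<noteq> {} \<and> (\<forall>V\<in>\<T>. tetra V) \<and>
     (\<Union>V\<in>\<T>. convex hull V) = closure \<Omega> \<and>
     (\<forall>V\<in>\<T>. \<forall>W\<in>\<T>. V \<noteq> W \<longrightarrow> convex hull V \<inter> convex hull W = convex hull (V \<inter> W))"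

definition nodes :: "pt set set \<Rightarrow> pt set" where
  "nodes \<T> = \<Union>\<T>"

text \<open>Globally continuous, elementwise affine vector fields on closure Omega
(extended by zero outside closure Omega, so that they are determined by nodal values).\<close>
definition S1 :: "pt set set \<Rightarrow> pt set \<Rightarrow> vfield set" where
  "S1 \<T> \<Omega> = {u. continuous_on (closure \<Omega>) u \<and>
      (\<forall>V\<in>\<T>. \<exists>(M::mat3) b. \<forall>x\<in>convex hull V. u x = M *v x + b) \<and>
      (\<forall>x. x \<notin> closure \<Omega> \<longrightarrow> u x = 0)}"

definition S1D :: "pt set set \<Rightarrow> pt set \<Rightarrow> pt set \<Rightarrow> vfield set" where
  "S1D \<T> \<Omega> \<Gamma>D = {u \<in> S1 \<T> \<Omega>. \<forall>x\<in>\<Gamma>D. u x = 0}"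

definition Kh :: "pt set set \<Rightarrow> pt set \<Rightarrow> vfield \<Rightarrow> vfield set" where
  "Kh \<T> \<Omega> m = {\<psi> \<in> S1 \<T> \<Omega>. \<forall>z\<in>nodes \<T>. m z \<bullet> \<psi> z = 0}"

definition Mh0 :: "pt set set \<Rightarrow> pt set \<Rightarrow> vfield set" where
  "Mh0 \<T> \<Omega> = {\<phi> \<in> S1 \<T> \<Omega>. \<forall>z\<in>nodes \<T>. norm (\<phi> z) = 1}"

definition Pih :: "pt set set \<Rightarrow> pt set \<Rightarrow> vfield \<Rightarrow> vfield" where
  "Pih \<T> \<Omega> \<phi> = (THE w. w \<in> S1 \<T> \<Omega> \<and> (\<forall>z\<in>nodes \<T>. w z = sgn (\<phi> z)))"

definition grad :: "vfield \<Rightarrow> pt \<Rightarrow> mat3" where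
  "grad u x = jacobian u (at x)"

definition symeps :: "vfield \<Rightarrow> pt \<Rightarrow> mat3" where
  "symeps u x = (1/2) *\<^sub>R (grad u x + transpose (grad u x))"

definition frob :: "mat3 \<Rightarrow> mat3 \<Rightarrow> real" where
  "frob A B = (\<Sum>i\<in>UNIV. \<Sum>j\<in>UNIV. A $ i $ j * B $ i $ j)"

definition ddot :: "tensor4 \<Rightarrow> mat3 \<Rightarrow> mat3" where
  "ddot T A = (\<chi> i j. \<Sum>k\<in>UNIV. \<Sum>l\<in>UNIV. T i j k l * A $ k $ l)"

definition ttrans :: "tensor4 \<Rightarrow> tensor4" where
  "ttrans T = (\<lambda>i j k l. T k l i j)"

definition outer :: "real^3 \<Rightarrow> real^3 \<Rightarrow> mat3" where
  "outer a b = (\<chi> i j. a $ i * b $ j)"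

definition minor_sym :: "tensor4 \<Rightarrow> bool" where
  "minor_sym T \<longleftrightarrow> (\<forall>i j k l. T i j k l = T j i k l \<and> T i j k l = T i j l k)"

definition major_sym :: "tensor4 \<Rightarrow> bool" where
  "major_sym T \<longleftrightarrow> (\<forall>i j k l. T i j k l = T k l i j)"

definition unif_pos_def :: "tensor4 \<Rightarrow> bool" where
  "unif_pos_def T \<longleftrightarrow> (\<exists>c>0. \<forall>A::mat3. transpose A = A \<longrightarrow> frob (ddot T A) A \<ge> c * frob A A)"

definition eps_m :: "tensor4 \<Rightarrow> vfield \<Rightarrow> pt \<Rightarrow> mat3" where
  "eps_m Z m x = ddot Z (outer (m x) (m x))"

definition sigma :: "tensor4 \<Rightarrow> tensor4 \<Rightarrow> vfield \<Rightarrow> vfield \<Rightarrow> pt \<Rightarrow> mat3" where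
  "sigma Z C u m x = ddot C (symeps u x - eps_m Z m x)"

definition mstress :: "tensor4 \<Rightarrow> tensor4 \<Rightarrow> vfield \<Rightarrow> vfield \<Rightarrow> vfield" where
  "mstress Z C u m x = (2 *\<^sub>R ddot (ttrans Z) (sigma Z C u m x)) *v m x"

definition ip :: "pt set \<Rightarrow> vfield \<Rightarrow> vfield \<Rightarrow> real" where
  "ip \<Omega> f g = (LINT x:\<Omega>|lborel. f x \<bullet> g x)"

definition mip :: "pt set \<Rightarrow> (pt \<Rightarrow> mat3) \<Rightarrow> (pt \<Rightarrow> mat3) \<Rightarrow> real" where
  "mip \<Omega> A B = (LINT x:\<Omega>|lborel. frob (A x) (B x))"

definition gip :: "pt set \<Rightarrow> vfield \<Rightarrow> vfield \<Rightarrow> real" where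
  "gip \<Omega> f g = mip \<Omega> (grad f) (grad g)"

definition hat :: "(nat \<Rightarrow> vfield) \<Rightarrow> nat \<Rightarrow> vfield" where
  "hat f i = (\<lambda>x. (3/2) *\<^sub>R f i x - (1/2) *\<^sub>R f (i - 1) x)"

definition scheme ::
  "pt set \<Rightarrow> pt set \<Rightarrow> pt set set \<Rightarrow> real \<Rightarrow> real \<Rightarrow> tensor4 \<Rightarrow> tensor4 \<Rightarrow> real \<Rightarrow> nat \<Rightarrow>
   (nat \<Rightarrow> vfield) \<Rightarrow> (nat \<Rightarrow> vfield) \<Rightarrow> (nat \<Rightarrow> vfield) \<Rightarrow> vfield \<Rightarrow> bool" where
  "scheme \<Omega> \<Gamma>D \<T> \<alpha> \<beta> Z C k N m v u ud0 \<longleftrightarrow>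
     m 0 \<in> Mh0 \<T> \<Omega> \<and> u 0 \<in> S1D \<T> \<Omega> \<Gamma>D \<and> ud0 \<in> S1 \<T> \<Omega> \<and>
     \<comment> \<open>initialization (1)\<close>
     v 1 \<in> Kh \<T> \<Omega> (m 0) \<and>
     (\<forall>\<phi>\<in>Kh \<T> \<Omega> (m 0).
        \<alpha> * ip \<Omega> (v 1) \<phi> + ip \<Omega> (\<lambda>x. cross3 (m 0 x) (v 1 x)) \<phi> + k / 2 * gip \<Omega> (v 1) \<phi>
        = - gip \<Omega> (m 0) \<phi> + ip \<Omega> (mstress Z C (u 0) (m 0)) \<phi>) \<and>
     m 1 = (\<lambda>x. m 0 x + k *\<^sub>R v 1 x) \<and>
     \<comment> \<open>initialization (2)\<close>
     u 1 \<in> S1D \<T> \<Omega> \<Gamma>D \<and>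
     (\<forall>\<psi>\<in>S1D \<T> \<Omega> \<Gamma>D.
        ip \<Omega> (\<lambda>x. (1 / k\<^sup>2) *\<^sub>R (u 1 x - u 0 x - k *\<^sub>R ud0 x)) \<psi>
          + \<beta> * mip \<Omega> (\<lambda>x. ddot C (symeps (u 1) x)) (symeps \<psi>)
        = - (1/2 - \<beta>) * mip \<Omega> (sigma Z C (u 0) (m 0)) (symeps \<psi>)
          + \<beta> * mip \<Omega> (\<lambda>x. ddot C (eps_m Z (Pih \<T> \<Omega> (m 1)) x)) (symeps \<psi>)) \<and>
     \<comment> \<open>time loop, i = 1, ..., N-1\<close>
     (\<forall>i. 1 \<le> i \<and> i \<le> N - 1 \<longrightarrow>
        v (i+1) \<in> Kh \<T> \<Omega> (hat m i) \<and>
        (\<forall>\<phi>\<in>Kh \<T> \<Omega> (hat m i).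
           \<alpha> * ip \<Omega> (v (i+1)) \<phi> + ip \<Omega> (\<lambda>x. cross3 (hat m i x) (v (i+1) x)) \<phi>
             + k / 2 * gip \<Omega> (v (i+1)) \<phi>
           = - gip \<Omega> (m i) \<phi>
             + ip \<Omega> (mstress Z C (hat u i) (Pih \<T> \<Omega> (hat m i))) \<phi>) \<and>
        m (i+1) = (\<lambda>x. m i x + k *\<^sub>R v (i+1) x) \<and>
        u (i+1) \<in> S1D \<T> \<Omega> \<Gamma>D \<and>
        (\<forall>\<psi>\<in>S1D \<T> \<Omega> \<Gamma>D.
           ip \<Omega> (\<lambda>x. (1 / k\<^sup>2) *\<^sub>R (u (i+1) x - 2 *\<^sub>R u i x + u (i-1) x)) \<psi>
             + \<beta> * mip \<Omega> (\<lambda>x. ddot C (symeps (u (i+1)) x)) (symeps \<psi>)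
           = - (1 - 2*\<beta>) * mip \<Omega> (sigma Z C (u i) (Pih \<T> \<Omega> (m i))) (symeps \<psi>)
             - \<beta> * mip \<Omega> (sigma Z C (u (i-1)) (Pih \<T> \<Omega> (m (i-1)))) (symeps \<psi>)
             + \<beta> * mip \<Omega> (\<lambda>x. ddot C (eps_m Z (Pih \<T> \<Omega> (m (i+1))) x)) (symeps \<psi>)))"

end

theory Submission
  imports Defs
begin

text \<open>Testing the LLG step with the update v itself (admissible, since v lies in the tangent
space K_h) removes the precession term and yields the discrete energy law
  |grad m^(i+1)|^2 + k alpha |v^(i+1)|^2 \<le> |grad m^i|^2 + (k/alpha) |2 Z^T : sigma m|^2
by Young's inequality. The nodal projection takes values of norm at most 1, so the
magnetostrictive force is pointwise bounded by K (|eps(u)| + 1), and the extrapolated strain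
satisfies |eps(u^(i+1/2))|^2 \<le> 5/2 (|eps(u^i)|^2 + |eps(u^(i-1))|^2). Summing the energy law
over the steps gives the estimate. Most of the work makes
the L2 products of P1 fields meaningful: the gradient of a P1 field is constant on each set of
points that lie in the same elements, hence bounded and Borel measurable on Omega.\<close>

section \<open>Meshes and piecewise affine fields\<close>

lemma tet_mesh_finite: "tet_mesh T \<Omega> \<Longrightarrow> finite T"
  by (simp add: tet_mesh_def)

lemma tet_mesh_obtain_element:
  assumes "tet_mesh T \<Omega>" "x \<in> closure \<Omega>"
  obtains V where "V \<in> T" "x \<in> convex hull V"
proof -
  have "x \<in> (\<Union>V\<in>T. convex hull V)" using assms unfolding tet_mesh_def by simp
  then show thesis using that by blast
qed

lemma tet_mesh_element_subset_closure:
  "tet_mesh T \<Omega> \<Longrightarrow> V \<in> T \<Longrightarrow> convex hull V \<subseteq> closure \<Omega>"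
  unfolding tet_mesh_def by auto

lemma tet_mesh_conforming:
  "tet_mesh T \<Omega> \<Longrightarrow> V \<in> T \<Longrightarrow> W \<in> T \<Longrightarrow> V \<noteq> W
    \<Longrightarrow> convex hull V \<inter> convex hull W = convex hull (V \<inter> W)"
  unfolding tet_mesh_def by blast

lemma tet_mesh_element:
  assumes "tet_mesh T \<Omega>" "V \<in> T"
  shows "V \<noteq> {}" "\<not> affine_dependent V" "closed (convex hull V)"
    "interior (convex hull V) \<noteq> {}"
proof -
  have V: "finite V" "card V = Suc DIM(real^3)" "\<not> affine_dependent V"
    using assms unfolding tet_mesh_def tetra_def by auto
  then show "V \<noteq> {}" "\<not> affine_dependent V" by auto
  show "closed (convex hull V)"
    using V by (simp add: compact_imp_closed finite_imp_compact_convex_hull)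
  show "interior (convex hull V) \<noteq> {}"
    using V interior_convex_hull_eq_empty by blast
qed

definition elem_matrix :: "vfield \<Rightarrow> pt set \<Rightarrow> mat3" where
  "elem_matrix f V = (SOME M. \<exists>b. \<forall>x\<in>convex hull V. f x = M *v x + b)"

definition elem_offset :: "vfield \<Rightarrow> pt set \<Rightarrow> pt" where
  "elem_offset f V = (SOME b. \<forall>x\<in>convex hull V. f x = elem_matrix f V *v x + b)"

lemma S1_affine_on_element:
  assumes "f \<in> S1 T \<Omega>" "V \<in> T" "x \<in> convex hull V"
  shows "f x = elem_matrix f V *v x + elem_offset f V"
proof -
  have "\<exists>M b. \<forall>x\<in>convex hull V. f x = M *v x + b"
    using assms unfolding S1_def by auto
  then have "\<exists>b. \<forall>x\<in>convex hull V. f x = elem_matrix f V *v x + b"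
    unfolding elem_matrix_def by (rule someI_ex)
  then have "\<forall>x\<in>convex hull V. f x = elem_matrix f V *v x + elem_offset f V"
    unfolding elem_offset_def by (rule someI_ex)
  then show ?thesis using assms(3) by blast
qed

lemma S1_zero_outside: "f \<in> S1 T \<Omega> \<Longrightarrow> x \<notin> closure \<Omega> \<Longrightarrow> f x = 0"
  unfolding S1_def by auto

lemma S1_lincomb:
  assumes f: "f \<in> S1 T \<Omega>" and g: "g \<in> S1 T \<Omega>"
  shows "(\<lambda>x. a *\<^sub>R f x + b *\<^sub>R g x) \<in> S1 T \<Omega>"
  unfolding S1_def mem_Collect_eq
proof (intro conjI ballI allI impI)
  show "continuous_on (closure \<Omega>) (\<lambda>x. a *\<^sub>R f x + b *\<^sub>R g x)"
    using assms unfolding S1_def by (auto intro!: continuous_intros)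
  show "a *\<^sub>R f x + b *\<^sub>R g x = 0" if "x \<notin> closure \<Omega>" for x
    using that f g by (simp add: S1_zero_outside)
  fix V assume V: "V \<in> T"
  have "a *\<^sub>R f x + b *\<^sub>R g x = (a *\<^sub>R elem_matrix f V + b *\<^sub>R elem_matrix g V) *v x
      + (a *\<^sub>R elem_offset f V + b *\<^sub>R elem_offset g V)" if "x \<in> convex hull V" for x
    using S1_affine_on_element[OF f V that] S1_affine_on_element[OF g V that]
    by (simp add: matrix_vector_mult_add_rdistrib scaleR_matrix_vector_assoc algebra_simps)
  then show "\<exists>M c. \<forall>x\<in>convex hull V. a *\<^sub>R f x + b *\<^sub>R g x = M *v x + c" by blast
qed

lemma affine_map_convex_hull_into:
  fixes M :: "real^'n^'m"
  assumes "convex S" "\<forall>v\<in>V. M *v v + b \<in> S" "x \<in> convex hull V"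
  shows "M *v x + b \<in> S"
proof -
  have "{y. M *v y + b \<in> S} = (*v) M -` ((\<lambda>z. z - b) ` S)"
  proof (intro set_eqI iffI)
    fix y assume "y \<in> {y. M *v y + b \<in> S}"
    then show "y \<in> (*v) M -` ((\<lambda>z. z - b) ` S)" by (auto intro!: image_eqI[where x="M *v y + b"])
  qed auto
  moreover have "convex ((*v) M -` ((\<lambda>z. z - b) ` S))"
    by (rule convex_linear_vimage[OF matrix_vector_mul_linear convex_translation_subtract[OF assms(1)]])
  ultimately have "convex {y. M *v y + b \<in> S}" by simp
  then have "convex hull V \<subseteq> {y. M *v y + b \<in> S}"
    using assms(2) by (intro hull_minimal) auto
  then show ?thesis using assms(3) by auto
qed

lemma affine_interpolation_exists:
  fixes d :: "real^'n \<Rightarrow> real^'m"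
  assumes "\<not> affine_dependent V" "V \<noteq> {}"
  shows "\<exists>M b. \<forall>v\<in>V. M *v v + b = d v"
proof -
  obtain v0 where v0: "v0 \<in> V" using assms(2) by auto
  have indep: "\<not> dependent ((+) (- v0) ` (V - {v0}))"
    using assms(1) affine_dependent_iff_dependent[of v0 "V - {v0}"] v0
    by (simp add: insert_absorb)
  then obtain g where g: "linear g" and gV: "\<forall>y\<in>(+) (- v0) ` (V - {v0}). g y = d (y + v0) - d v0"
    using linear_independent_extend[OF indep, of "\<lambda>y. d (y + v0) - d v0"] by blast
  have Mg: "matrix g *v y = g y" for y
    using matrix_vector_mul(2)[OF g] by metis
  have "matrix g *v v + (d v0 - g v0) = d v" if "v \<in> V" for v
  proof (cases "v = v0")
    case False
    then have "g (- v0 + v) = d v - d v0" using gV that by auto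
    then show ?thesis by (simp add: Mg linear_diff[OF g] algebra_simps)
  qed (simp add: Mg)
  then show ?thesis by blast
qed

lemma element_interpolants_agree:
  assumes m: "tet_mesh T \<Omega>" and interp: "\<And>V v. V \<in> T \<Longrightarrow> v \<in> V \<Longrightarrow> M V *v v + b V = d v"
    and V: "V \<in> T" "x \<in> convex hull V" and W: "W \<in> T" "x \<in> convex hull W"
  shows "M V *v x + b V = M W *v x + b W"
proof (cases "V = W")
  case False
  then have "x \<in> convex hull (V \<inter> W)" using tet_mesh_conforming[OF m V(1) W(1)] V W by blast
  moreover have "\<forall>v\<in>V \<inter> W. (M V - M W) *v v + (b V - b W) \<in> {0}"
    using interp V(1) W(1) by (simp add: matrix_vector_mult_diff_rdistrib algebra_simps)
  ultimately have "(M V - M W) *v x + (b V - b W) \<in> {0}"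
    by (intro affine_map_convex_hull_into) auto
  then show ?thesis by (simp add: matrix_vector_mult_diff_rdistrib algebra_simps)
qed simp

lemma S1_interpolant_exists:
  assumes m: "tet_mesh T \<Omega>"
  shows "\<exists>w\<in>S1 T \<Omega>. \<forall>z\<in>nodes T. w z = d z"
proof -
  have "\<exists>M b. \<forall>v\<in>V. M *v v + b = d v" if "V \<in> T" for V
    using affine_interpolation_exists tet_mesh_element[OF m that] by blast
  then obtain M b where Mb: "\<And>V v. V \<in> T \<Longrightarrow> v \<in> V \<Longrightarrow> M V *v v + b V = d v"
    by metis
  note agree = element_interpolants_agree[of T \<Omega> M b d, OF m Mb]
  define sel where "sel x = (SOME V. V \<in> T \<and> x \<in> convex hull V)" for x
  define w where "w x = (if x \<in> closure \<Omega> then M (sel x) *v x + b (sel x) else 0)" for x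
  have wV: "w x = M V *v x + b V" if V: "V \<in> T" "x \<in> convex hull V" for V x
  proof -
    have "sel x \<in> T \<and> x \<in> convex hull (sel x)"
      unfolding sel_def using V by (intro someI) blast
    moreover have "x \<in> closure \<Omega>" using tet_mesh_element_subset_closure[OF m V(1)] V(2) by blast
    ultimately show ?thesis using agree[of "sel x" x V] V unfolding w_def by simp
  qed
  have "continuous_on (\<Union>V\<in>T. convex hull V) w"
  proof (rule continuous_on_closed_Union[OF tet_mesh_finite[OF m]])
    fix V assume V: "V \<in> T"
    show "closed (convex hull V)" using tet_mesh_element(3)[OF m V] .
    have "continuous_on (convex hull V) (\<lambda>x. M V *v x + b V)"
      by (intro continuous_intros linear_continuous_on matrix_vector_mul_bounded_linear)
    then show "continuous_on (convex hull V) w"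
      by (rule continuous_on_eq) (use wV V in auto)
  qed
  then have "w \<in> S1 T \<Omega>"
    using wV m unfolding S1_def tet_mesh_def by (auto simp: w_def)
  moreover have "w z = d z" if z: "z \<in> nodes T" for z
  proof -
    obtain V where "V \<in> T" "z \<in> V" using z unfolding nodes_def by blast
    then show ?thesis using wV[OF _ hull_inc] Mb by simp
  qed
  ultimately show ?thesis by blast
qed

lemma S1_eq_if_nodes_eq:
  assumes m: "tet_mesh T \<Omega>" and w1: "w1 \<in> S1 T \<Omega>" and w2: "w2 \<in> S1 T \<Omega>"
    and nodes: "\<forall>z\<in>nodes T. w1 z = w2 z"
  shows "w1 = w2"
proof
  fix x show "w1 x = w2 x"
  proof (cases "x \<in> closure \<Omega>")
    case True
    then obtain V where V: "V \<in> T" "x \<in> convex hull V" by (rule tet_mesh_obtain_element[OF m])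
    let ?M = "elem_matrix w1 V - elem_matrix w2 V" and ?b = "elem_offset w1 V - elem_offset w2 V"
    have "?M *v v + ?b \<in> {0}" if "v \<in> V" for v
    proof -
      have "v \<in> nodes T" using V(1) that unfolding nodes_def by blast
      then show ?thesis
        using nodes S1_affine_on_element[OF w1 V(1) hull_inc[OF that]]
          S1_affine_on_element[OF w2 V(1) hull_inc[OF that]]
        by (simp add: matrix_vector_mult_diff_rdistrib algebra_simps)
    qed
    then have "?M *v x + ?b \<in> {0}" using V(2) by (intro affine_map_convex_hull_into) auto
    then show ?thesis
      using S1_affine_on_element[OF w1 V] S1_affine_on_element[OF w2 V]
      by (simp add: matrix_vector_mult_diff_rdistrib algebra_simps)
  qed (simp add: S1_zero_outside[OF w1] S1_zero_outside[OF w2])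
qed

lemma S1_norm_le_nodal_bound:
  assumes m: "tet_mesh T \<Omega>" and w: "w \<in> S1 T \<Omega>"
    and bound: "\<forall>z\<in>nodes T. norm (w z) \<le> R" and "0 \<le> R"
  shows "norm (w x) \<le> R"
proof (cases "x \<in> closure \<Omega>")
  case True
  then obtain V where V: "V \<in> T" "x \<in> convex hull V" by (rule tet_mesh_obtain_element[OF m])
  have "elem_matrix w V *v v + elem_offset w V \<in> cball 0 R" if "v \<in> V" for v
  proof -
    have "v \<in> nodes T" using V(1) that unfolding nodes_def by blast
    then show ?thesis
      using bound S1_affine_on_element[OF w V(1) hull_inc[OF that], symmetric] by simp
  qed
  then have "elem_matrix w V *v x + elem_offset w V \<in> cball 0 R"
    using V(2) by (intro affine_map_convex_hull_into) auto
  then show ?thesis using S1_affine_on_element[OF w V] by simp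
qed (simp add: S1_zero_outside[OF w] \<open>0 \<le> R\<close>)

lemma Pih_S1:
  assumes "tet_mesh T \<Omega>"
  shows "Pih T \<Omega> \<phi> \<in> S1 T \<Omega>" and "\<forall>z\<in>nodes T. Pih T \<Omega> \<phi> z = sgn (\<phi> z)"
proof -
  obtain w where w: "w \<in> S1 T \<Omega>" "\<forall>z\<in>nodes T. w z = sgn (\<phi> z)"
    using S1_interpolant_exists[OF assms, of "\<lambda>z. sgn (\<phi> z)"] by blast
  have "\<exists>!w. w \<in> S1 T \<Omega> \<and> (\<forall>z\<in>nodes T. w z = sgn (\<phi> z))"
  proof (rule ex1I[of _ w])
    fix w' assume "w' \<in> S1 T \<Omega> \<and> (\<forall>z\<in>nodes T. w' z = sgn (\<phi> z))"
    then show "w' = w" using w by (intro S1_eq_if_nodes_eq[OF assms]) auto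
  qed (use w in blast)
  then have "Pih T \<Omega> \<phi> \<in> S1 T \<Omega> \<and> (\<forall>z\<in>nodes T. Pih T \<Omega> \<phi> z = sgn (\<phi> z))"
    unfolding Pih_def by (rule theI')
  then show "Pih T \<Omega> \<phi> \<in> S1 T \<Omega>" "\<forall>z\<in>nodes T. Pih T \<Omega> \<phi> z = sgn (\<phi> z)" by auto
qed

lemma Pih_norm_le_1:
  assumes "tet_mesh T \<Omega>"
  shows "norm (Pih T \<Omega> \<phi> x) \<le> 1"
  using S1_norm_le_nodal_bound[OF assms Pih_S1(1)[OF assms]] Pih_S1(2)[OF assms]
  by (simp add: norm_sgn)

section \<open>Gradients of piecewise affine fields\<close>

lemma grad_eqI:
  fixes M :: mat3
  assumes "(f has_derivative (\<lambda>h. M *v h)) (at x)"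
  shows "grad f x = M"
  unfolding grad_def jacobian_def
  using frechet_derivative_at[OF assms] matrix_of_matrix_vector_mul by metis

lemma has_derivative_affine:
  fixes M :: "real^'n^'m"
  shows "((\<lambda>y. M *v y + b) has_derivative (\<lambda>h. M *v h)) F"
  by (intro has_derivative_add_const bounded_linear_imp_has_derivative matrix_vector_mul_bounded_linear)

lemma has_derivative_affine_on_interior:
  fixes M :: "real^'n^'m"
  assumes "\<forall>y\<in>K. f y = M *v y + b" "x \<in> interior K"
  shows "(f has_derivative (\<lambda>h. M *v h)) (at x)"
  by (rule has_derivative_transform_within_open[OF has_derivative_affine[of M b] open_interior assms(2)])
     (metis assms(1) interior_subset subsetD)

lemma linear_eq_0_if_vanishes_on_body:
  fixes D :: "'a::real_normed_vector \<Rightarrow> 'b::real_vector"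
  assumes "linear D" "interior K \<noteq> {}" "\<And>y. y \<in> K \<Longrightarrow> D (y - x) = 0"
  shows "D h = 0"
proof -
  obtain c r where r: "0 < r" "ball c r \<subseteq> K"
    using assms(2) by (auto simp: mem_interior)
  define s where "s = r / (2 * (norm h + 1))"
  have "0 < norm h + 1" by (smt (verit) norm_ge_zero)
  then have s: "0 < s" "s * norm h < r"
    using r(1) by (simp_all add: s_def field_simps add_nonneg_pos)
  then have "c + s *\<^sub>R h \<in> K" "c \<in> K" using r by (auto intro!: subsetD[OF r(2)] simp: dist_norm)
  then have "D (c - x + s *\<^sub>R h) = 0" "D (c - x) = 0"
    using assms(3) by (auto simp: algebra_simps)
  then show ?thesis
    using s(1) by (simp add: linear_add[OF assms(1)] linear_cmul[OF assms(1)])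
qed

lemma has_derivative_affine_on_convex_unique:
  fixes f :: "real^'n \<Rightarrow> real^'m" and M :: "real^'n^'m"
  assumes K: "convex K" "interior K \<noteq> {}" "x \<in> K" and affine: "\<forall>y\<in>K. f y = M *v y + b"
    and deriv: "(f has_derivative L) (at x)"
  shows "L = (\<lambda>h. M *v h)"
proof -
  define D where "D h = L h - M *v h" for h
  have "linear D"
    unfolding D_def using has_derivative_linear[OF deriv] matrix_vector_mul_linear
    by (rule linear_compose_sub)
  let ?g = "\<lambda>y. f y - (M *v y + b)"
  have g: "(?g has_derivative D) (at x)"
    unfolding D_def[abs_def] by (rule has_derivative_diff[OF deriv has_derivative_affine])
  \<comment> \<open>?g vanishes on K, so its derivative D vanishes in every direction pointing into K\<close>
  have vanish: "D (y - x) = 0" if y: "y \<in> K" for y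
  proof -
    define p where "p t = x + t *\<^sub>R (y - x)" for t :: real
    have pK: "p t \<in> K" if "t \<in> {0..1}" for t
      using convexD_alt[OF K(1) K(3) y, of t] that by (simp add: p_def algebra_simps)
    have "(p has_vector_derivative (y - x)) (at 0 within {0..1})"
      unfolding p_def by (auto intro!: derivative_eq_intros)
    moreover have "(?g has_derivative D) (at (p 0) within p ` {0..1})"
      using has_derivative_at_withinI[OF g] by (simp add: p_def)
    ultimately have "(?g \<circ> p has_vector_derivative D (y - x)) (at 0 within {0..1})"
      by (rule vector_derivative_diff_chain_within)
    moreover have "(?g \<circ> p has_vector_derivative 0) (at 0 within {0..1})"
      by (rule has_vector_derivative_transform_within[OF has_vector_derivative_const zero_less_one])
         (use pK affine in auto)
    ultimately show ?thesis
      using vector_derivative_unique_within_closed_interval[of 0 1 0] by auto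
  qed
  have "D h = 0" for h by (rule linear_eq_0_if_vanishes_on_body[OF \<open>linear D\<close> K(2) vanish])
  then show ?thesis unfolding D_def by auto
qed

definition elements_at :: "pt set set \<Rightarrow> pt \<Rightarrow> pt set set" where
  "elements_at T x = {V\<in>T. x \<in> convex hull V}"

lemma S1_has_derivative_if_elem_matrices_agree:
  assumes m: "tet_mesh T \<Omega>" and "open \<Omega>" and f: "f \<in> S1 T \<Omega>" and x: "x \<in> \<Omega>"
    and M: "\<forall>V\<in>elements_at T x. elem_matrix f V = M"
  shows "(f has_derivative (\<lambda>h. M *v h)) (at x)"
proof -
  define U where "U = \<Omega> - (\<Union>W\<in>{W\<in>T. x \<notin> convex hull W}. convex hull W)"
  have "open U"
    unfolding U_def using tet_mesh_finite[OF m] tet_mesh_element(3)[OF m] \<open>open \<Omega>\<close>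
    by (intro open_Diff closed_UN) auto
  moreover have "x \<in> U" using x by (auto simp: U_def)
  moreover have "\<forall>y\<in>U. f y = M *v y + (f x - M *v x)"
  proof
    fix y assume y: "y \<in> U"
    have "y \<in> closure \<Omega>" using y closure_subset by (auto simp: U_def)
    then obtain V where V: "V \<in> T" "y \<in> convex hull V" by (rule tet_mesh_obtain_element[OF m])
    then have xV: "x \<in> convex hull V" using y by (auto simp: U_def)
    then have "elem_matrix f V = M" using M V(1) by (auto simp: elements_at_def)
    then show "f y = M *v y + (f x - M *v x)"
      using S1_affine_on_element[OF f V] S1_affine_on_element[OF f V(1) xV] by simp
  qed
  ultimately show ?thesis
    using has_derivative_affine_on_interior[of U f M] interior_open by metis
qed

lemma grad_S1_eq_if_elements_at_eq:
  assumes m: "tet_mesh T \<Omega>" and "open \<Omega>" and f: "f \<in> S1 T \<Omega>" and "x \<in> \<Omega>" "y \<in> \<Omega>"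
    and xy: "elements_at T x = elements_at T y"
  shows "grad f x = grad f y"
proof (cases "\<exists>M. \<forall>V\<in>elements_at T x. elem_matrix f V = M")
  case True
  then obtain M where "\<forall>V\<in>elements_at T x. elem_matrix f V = M" by blast
  then have "grad f x = M" "grad f y = M"
    using S1_has_derivative_if_elem_matrices_agree[OF m \<open>open \<Omega>\<close> f] assms(4,5) xy
    by (auto intro: grad_eqI)
  then show ?thesis by simp
next
  case False
  \<comment> \<open>then f is differentiable at neither point, and both Jacobians are the junk value of SOME\<close>
  have not_diff: "\<not> (f has_derivative L) (at z)" if z: "elements_at T z = elements_at T x" for z L
  proof
    assume L: "(f has_derivative L) (at z)"
    have "elem_matrix f V = matrix L" if V: "V \<in> elements_at T x" for V
    proof -
      have V': "V \<in> T" "z \<in> convex hull V" using V z by (auto simp: elements_at_def)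
      have "\<forall>y\<in>convex hull V. f y = elem_matrix f V *v y + elem_offset f V"
        using S1_affine_on_element[OF f V'(1)] by blast
      then have "L = (\<lambda>h. elem_matrix f V *v h)"
        using has_derivative_affine_on_convex_unique[OF convex_convex_hull
            tet_mesh_element(4)[OF m V'(1)] V'(2) _ L] by blast
      then show ?thesis by (simp add: matrix_of_matrix_vector_mul)
    qed
    with False show False by blast
  qed
  have "(\<lambda>L. (f has_derivative L) (at x)) = (\<lambda>L. (f has_derivative L) (at y))"
    using not_diff xy by auto
  then show ?thesis unfolding grad_def jacobian_def frechet_derivative_def by simp
qed

lemma convex_frontier_null_sets:
  fixes K :: "'a::euclidean_space set"
  assumes "convex K"
  shows "frontier K \<in> null_sets lborel"
  using negligible_convex_frontier[OF assms] negligible_iff_null_sets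
    null_sets_completion_iff[of "frontier K" lborel] by auto

lemma grad_S1_lincomb_AE:
  assumes m: "tet_mesh T \<Omega>" and f: "f \<in> S1 T \<Omega>" and g: "g \<in> S1 T \<Omega>"
  shows "AE x in lborel. x \<in> \<Omega> \<longrightarrow>
    grad (\<lambda>y. a *\<^sub>R f y + b *\<^sub>R g y) x = a *\<^sub>R grad f x + b *\<^sub>R grad g x"
proof (rule AE_I')
  show "(\<Union>V\<in>T. frontier (convex hull V)) \<in> null_sets lborel"
    using tet_mesh_finite[OF m] by (intro null_sets.finite_UN convex_frontier_null_sets) auto
next
  have "grad (\<lambda>y. a *\<^sub>R f y + b *\<^sub>R g y) x = a *\<^sub>R grad f x + b *\<^sub>R grad g x"
    if x: "x \<in> \<Omega>" "x \<notin> (\<Union>V\<in>T. frontier (convex hull V))" for x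
  proof -
    obtain V where V: "V \<in> T" "x \<in> convex hull V"
      using x(1) closure_subset by (blast intro: tet_mesh_obtain_element[OF m])
    then have "x \<in> interior (convex hull V)"
      using x(2) tet_mesh_element(3)[OF m V(1)] by (auto simp: frontier_def)
    then have df: "(f has_derivative (\<lambda>h. elem_matrix f V *v h)) (at x)"
      and dg: "(g has_derivative (\<lambda>h. elem_matrix g V *v h)) (at x)"
      using S1_affine_on_element[OF f V(1)] S1_affine_on_element[OF g V(1)]
      by (auto intro!: has_derivative_affine_on_interior[of "convex hull V"])
    have "((\<lambda>y. a *\<^sub>R f y + b *\<^sub>R g y) has_derivative
        (\<lambda>h. (a *\<^sub>R elem_matrix f V + b *\<^sub>R elem_matrix g V) *v h)) (at x)"
      using has_derivative_add[OF has_derivative_scaleR_right[OF df] has_derivative_scaleR_right[OF dg]]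
      by (simp add: matrix_vector_mult_add_rdistrib scaleR_matrix_vector_assoc)
    then show ?thesis by (simp add: grad_eqI[OF df] grad_eqI[OF dg] grad_eqI)
  qed
  then show "{x \<in> space lborel. \<not> (x \<in> \<Omega> \<longrightarrow> grad (\<lambda>y. a *\<^sub>R f y + b *\<^sub>R g y) x
      = a *\<^sub>R grad f x + b *\<^sub>R grad g x)} \<subseteq> (\<Union>V\<in>T. frontier (convex hull V))"
    by blast
qed

section \<open>Bounded measurable fields and L2 products\<close>

definition bounded_measurable_on :: "pt set \<Rightarrow> (pt \<Rightarrow> 'a::euclidean_space) \<Rightarrow> bool" where
  "bounded_measurable_on \<Omega> f \<longleftrightarrow> set_borel_measurable lborel \<Omega> f \<and> bounded (f ` \<Omega>)"

lemma elements_at_level_set_borel: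
  assumes m: "tet_mesh T \<Omega>" and "open \<Omega>" and A: "A \<subseteq> T"
  shows "{x\<in>\<Omega>. elements_at T x = A} \<in> sets lborel"
proof -
  have "{x\<in>\<Omega>. elements_at T x = A}
      = \<Omega> \<inter> (\<Inter>V\<in>T. if V \<in> A then convex hull V else - (convex hull V))"
    using A unfolding elements_at_def by (auto split: if_splits)
  moreover have "(if V \<in> A then convex hull V else - (convex hull V)) \<in> sets borel"
    if "V \<in> T" for V
    using tet_mesh_element(3)[OF m that] by (simp add: borel_closed borel_open open_Compl)
  then have "(\<Inter>V\<in>T. if V \<in> A then convex hull V else - (convex hull V)) \<in> sets borel"
    using tet_mesh_finite[OF m] m by (intro sets.finite_INT) (auto simp: tet_mesh_def)
  ultimately show ?thesis using \<open>open \<Omega>\<close> by simp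
qed

lemma bounded_measurable_on_elementwise_constant:
  assumes m: "tet_mesh T \<Omega>" and "open \<Omega>"
    and H: "\<And>x y. x \<in> \<Omega> \<Longrightarrow> y \<in> \<Omega> \<Longrightarrow> elements_at T x = elements_at T y \<Longrightarrow> H x = H y"
  shows "bounded_measurable_on \<Omega> H"
proof -
  define piece where "piece A = {x\<in>\<Omega>. elements_at T x = A}" for A
  define val where "val A = H (SOME x. x \<in> piece A)" for A
  have val: "H x = val (elements_at T x)" if x: "x \<in> \<Omega>" for x
  proof -
    define y where "y = (SOME y. y \<in> piece (elements_at T x))"
    have "x \<in> piece (elements_at T x)" using x by (simp add: piece_def)
    then have "y \<in> piece (elements_at T x)" unfolding y_def by (rule someI)
    then have "H y = H x" using H[of y x] x by (simp add: piece_def)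
    then show ?thesis unfolding val_def y_def[symmetric] by simp
  qed
  have fin: "finite (Pow T)" using tet_mesh_finite[OF m] by simp
  have elements_at_Pow: "elements_at T x \<in> Pow T" for x by (auto simp: elements_at_def)
  have sum_eq: "indicator \<Omega> x *\<^sub>R H x = (\<Sum>A\<in>Pow T. indicator (piece A) x *\<^sub>R val A)" for x
  proof (cases "x \<in> \<Omega>")
    case True
    have "(\<Sum>A\<in>Pow T. indicator (piece A) x *\<^sub>R val A)
        = (\<Sum>A\<in>Pow T. if A = elements_at T x then val A else 0)"
      using True by (intro sum.cong) (auto simp: piece_def)
    also have "\<dots> = H x" using fin elements_at_Pow val[OF True] by (simp add: sum.delta')
    finally show ?thesis using True by simp
  qed (simp add: piece_def)
  have "piece A \<in> sets lborel" if "A \<in> Pow T" for A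
    unfolding piece_def using elements_at_level_set_borel[OF m \<open>open \<Omega>\<close>] that by blast
  then have "set_borel_measurable lborel \<Omega> H"
    unfolding set_borel_measurable_def sum_eq
    by (intro borel_measurable_sum borel_measurable_scaleR borel_measurable_indicator
        borel_measurable_const)
  moreover have "bounded (H ` \<Omega>)"
    using val fin by (intro bounded_subset[OF finite_imp_bounded[of "val ` Pow T"]])
      (use elements_at_Pow in auto)
  ultimately show ?thesis unfolding bounded_measurable_on_def ..
qed

lemma bounded_measurable_on_S1:
  assumes f: "f \<in> S1 T \<Omega>" and "open \<Omega>" "bounded \<Omega>"
  shows "bounded_measurable_on \<Omega> f"
proof -
  have "f = (\<lambda>x. indicator (closure \<Omega>) x *\<^sub>R f x)"
    using S1_zero_outside[OF f] by (auto simp: indicator_def)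
  also have "\<dots> \<in> borel_measurable borel"
    using f unfolding S1_def by (intro borel_measurable_continuous_on_indicator) auto
  finally have "set_borel_measurable lborel \<Omega> f"
    unfolding set_borel_measurable_def using \<open>open \<Omega>\<close>
    by (intro borel_measurable_scaleR borel_measurable_indicator) (simp_all add: borel_open)
  moreover have "compact (f ` closure \<Omega>)"
    using f \<open>bounded \<Omega>\<close> unfolding S1_def by (auto intro: compact_continuous_image)
  then have "bounded (f ` \<Omega>)"
    by (rule bounded_subset[OF compact_imp_bounded]) (use closure_subset in blast)
  ultimately show ?thesis unfolding bounded_measurable_on_def ..
qed

lemma bounded_measurable_on_const:
  assumes "open \<Omega>"
  shows "bounded_measurable_on \<Omega> (\<lambda>_. c)"
proof -
  have "(\<lambda>x. indicator \<Omega> x *\<^sub>R c) \<in> borel_measurable lborel"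
    using assms by (intro borel_measurable_scaleR borel_measurable_indicator) (simp_all add: borel_open)
  moreover have "bounded ((\<lambda>_. c) ` \<Omega>)" by (rule bounded_subset[of "{c}"]) auto
  ultimately show ?thesis unfolding bounded_measurable_on_def set_borel_measurable_def ..
qed

lemma bounded_measurable_on_continuous2:
  assumes "open \<Omega>" and f: "bounded_measurable_on \<Omega> f" and g: "bounded_measurable_on \<Omega> g"
    and H: "continuous_on UNIV (\<lambda>z. H (fst z) (snd z))"
  shows "bounded_measurable_on \<Omega> (\<lambda>x. H (f x) (g x))"
proof -
  have "(\<lambda>x. indicator \<Omega> x *\<^sub>R f x) \<in> borel_measurable lborel"
    "(\<lambda>x. indicator \<Omega> x *\<^sub>R g x) \<in> borel_measurable lborel"
    using f g unfolding bounded_measurable_on_def set_borel_measurable_def by blast+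
  from borel_measurable_continuous_Pair[OF this H]
  have "(\<lambda>x. H (indicator \<Omega> x *\<^sub>R f x) (indicator \<Omega> x *\<^sub>R g x)) \<in> borel_measurable lborel" .
  then have "(\<lambda>x. indicator \<Omega> x *\<^sub>R H (indicator \<Omega> x *\<^sub>R f x) (indicator \<Omega> x *\<^sub>R g x))
      \<in> borel_measurable lborel"
    using \<open>open \<Omega>\<close> by (intro borel_measurable_scaleR borel_measurable_indicator) (simp_all add: borel_open)
  moreover have "indicator \<Omega> x *\<^sub>R H (indicator \<Omega> x *\<^sub>R f x) (indicator \<Omega> x *\<^sub>R g x)
      = indicator \<Omega> x *\<^sub>R H (f x) (g x)" for x
    by (cases "x \<in> \<Omega>") auto
  ultimately have "set_borel_measurable lborel \<Omega> (\<lambda>x. H (f x) (g x))"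
    unfolding set_borel_measurable_def by simp
  moreover have "compact ((\<lambda>z. H (fst z) (snd z)) ` (closure (f ` \<Omega>) \<times> closure (g ` \<Omega>)))"
    using f g unfolding bounded_measurable_on_def
    by (intro compact_continuous_image continuous_on_subset[OF H] compact_Times) auto
  then have "bounded ((\<lambda>x. H (f x) (g x)) ` \<Omega>)"
    by (rule bounded_subset[OF compact_imp_bounded]) (force intro: closure_subset[THEN subsetD])
  ultimately show ?thesis unfolding bounded_measurable_on_def ..
qed

lemma bounded_measurable_on_set_integrable:
  fixes f :: "pt \<Rightarrow> real"
  assumes "open \<Omega>" "bounded \<Omega>" and f: "bounded_measurable_on \<Omega> f"
  shows "set_integrable lborel \<Omega> f"
proof -
  obtain B where B: "\<forall>x\<in>\<Omega>. norm (f x) \<le> B"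
    using f unfolding bounded_measurable_on_def bounded_iff by blast
  show ?thesis
    unfolding set_integrable_def
  proof (rule integrableI_bounded_set[where A = \<Omega> and B = B])
    show "\<Omega> \<in> sets lborel" using \<open>open \<Omega>\<close> by simp
    show "emeasure lborel \<Omega> < \<infinity>" using \<open>bounded \<Omega>\<close> by (rule emeasure_bounded_finite)
  qed (use f B in \<open>auto simp: bounded_measurable_on_def set_borel_measurable_def\<close>)
qed

lemma set_integrable_inner:
  assumes "open \<Omega>" "bounded \<Omega>" "bounded_measurable_on \<Omega> f" "bounded_measurable_on \<Omega> g"
  shows "set_integrable lborel \<Omega> (\<lambda>x. f x \<bullet> g x)"
proof -
  have "continuous_on UNIV (\<lambda>z::'a \<times> 'a. fst z \<bullet> snd z)"
    by (intro continuous_intros)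
  then show ?thesis
    by (intro bounded_measurable_on_set_integrable[OF assms(1,2)]
        bounded_measurable_on_continuous2[OF assms(1,3,4)])
qed

lemma bounded_measurable_on_grad:
  "tet_mesh T \<Omega> \<Longrightarrow> open \<Omega> \<Longrightarrow> f \<in> S1 T \<Omega> \<Longrightarrow> bounded_measurable_on \<Omega> (grad f)"
  by (intro bounded_measurable_on_elementwise_constant grad_S1_eq_if_elements_at_eq)

lemma bounded_measurable_on_symeps:
  "tet_mesh T \<Omega> \<Longrightarrow> open \<Omega> \<Longrightarrow> u \<in> S1 T \<Omega> \<Longrightarrow> bounded_measurable_on \<Omega> (symeps u)"
  unfolding symeps_def
  by (intro bounded_measurable_on_elementwise_constant) (auto dest: grad_S1_eq_if_elements_at_eq)

lemma continuous_on_ddot: "continuous_on S F \<Longrightarrow> continuous_on S (\<lambda>x. ddot T (F x))"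
  unfolding ddot_def by (intro continuous_intros)

lemma continuous_on_outer:
  "continuous_on S f \<Longrightarrow> continuous_on S g \<Longrightarrow> continuous_on S (\<lambda>x. outer (f x) (g x))"
  unfolding outer_def by (intro continuous_intros)

lemma continuous_on_matrix_vector_mult:
  fixes F :: "_ \<Rightarrow> real^'n^'m"
  shows "continuous_on S F \<Longrightarrow> continuous_on S g \<Longrightarrow> continuous_on S (\<lambda>x. F x *v g x)"
  unfolding matrix_vector_mult_def by (intro continuous_intros)

lemma bounded_measurable_on_mstress:
  assumes "tet_mesh T \<Omega>" "open \<Omega>" "bounded \<Omega>" "u \<in> S1 T \<Omega>" "P \<in> S1 T \<Omega>"
  shows "bounded_measurable_on \<Omega> (mstress Z C u P)"
proof -
  have "continuous_on UNIV (\<lambda>z. (2 *\<^sub>R ddot (ttrans Z) (ddot C (fst z - ddot Z (outer (snd z) (snd z)))))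
      *v (snd z :: real^3))"
    by (intro continuous_on_matrix_vector_mult continuous_on_ddot continuous_on_outer continuous_intros)
  from bounded_measurable_on_continuous2[OF _ bounded_measurable_on_symeps bounded_measurable_on_S1 this]
  show ?thesis
    using assms unfolding mstress_def sigma_def eps_m_def by blast
qed

lemma frob_eq_inner: "frob A B = A \<bullet> B"
  unfolding frob_def inner_vec_def inner_real_def by simp

lemma mip_eq_inner: "mip \<Omega> A B = (LINT x:\<Omega>|lborel. A x \<bullet> B x)"
  unfolding mip_def frob_eq_inner ..

lemma ip_nonneg: "0 \<le> ip \<Omega> f f"
  unfolding ip_def set_lebesgue_integral_def by (intro integral_nonneg_AE AE_I2) simp

lemma mip_nonneg: "0 \<le> mip \<Omega> A A"
  unfolding mip_eq_inner set_lebesgue_integral_def by (intro integral_nonneg_AE AE_I2) simp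

lemma gip_nonneg: "0 \<le> gip \<Omega> f f"
  unfolding gip_def by (rule mip_nonneg)

lemma set_integral_eq_AE:
  fixes f g :: "_ \<Rightarrow> real"
  assumes "set_integrable M A f" "set_integrable M A g" "AE x\<in>A in M. f x = g x"
  shows "(LINT x:A|M. f x) = (LINT x:A|M. g x)"
  using assms(3)
  by (intro antisym set_integral_mono_AE[OF assms(1,2)] set_integral_mono_AE[OF assms(2,1)])
     (auto elim: eventually_mono)

lemma gip_add_scaled:
  assumes m: "tet_mesh T \<Omega>" and "open \<Omega>" "bounded \<Omega>" and f: "f \<in> S1 T \<Omega>" and g: "g \<in> S1 T \<Omega>"
  shows "gip \<Omega> (\<lambda>x. f x + k *\<^sub>R g x) (\<lambda>x. f x + k *\<^sub>R g x)
    = gip \<Omega> f f + 2 * k * gip \<Omega> f g + k\<^sup>2 * gip \<Omega> g g"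
proof -
  let ?h = "\<lambda>x. f x + k *\<^sub>R g x"
  have h: "?h \<in> S1 T \<Omega>" using S1_lincomb[OF f g, of 1 k] by simp
  have int: "set_integrable lborel \<Omega> (\<lambda>x. grad p x \<bullet> grad q x)"
    if "p \<in> S1 T \<Omega>" "q \<in> S1 T \<Omega>" for p q
    using that by (intro set_integrable_inner bounded_measurable_on_grad[OF m] assms(2,3))
  have "AE x\<in>\<Omega> in lborel. grad ?h x \<bullet> grad ?h x
      = grad f x \<bullet> grad f x + 2 * k * (grad f x \<bullet> grad g x) + k\<^sup>2 * (grad g x \<bullet> grad g x)"
    using grad_S1_lincomb_AE[OF m f g, of 1 k]
    by (auto elim!: eventually_mono simp: inner_add_left inner_add_right inner_commute
        power2_eq_square algebra_simps)
  then have "gip \<Omega> ?h ?h = (LINT x:\<Omega>|lborel.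
      grad f x \<bullet> grad f x + 2 * k * (grad f x \<bullet> grad g x) + k\<^sup>2 * (grad g x \<bullet> grad g x))"
    unfolding gip_def mip_eq_inner using int[OF h h] int[OF f f] int[OF f g] int[OF g g]
    by (intro set_integral_eq_AE) auto
  then show ?thesis
    unfolding gip_def mip_eq_inner using int[OF f f] int[OF f g] int[OF g g] by simp
qed

section \<open>The discrete energy estimate\<close>

lemma inner_le_weighted_squares:
  fixes a b :: "'a::real_inner"
  assumes "0 < \<alpha>"
  shows "a \<bullet> b \<le> \<alpha> / 2 * (b \<bullet> b) + 1 / (2 * \<alpha>) * (a \<bullet> a)"
proof -
  have "0 \<le> (\<alpha> *\<^sub>R b - a) \<bullet> (\<alpha> *\<^sub>R b - a)" by simp
  also have "\<dots> = 2 * \<alpha> * (\<alpha> / 2 * (b \<bullet> b) + 1 / (2 * \<alpha>) * (a \<bullet> a) - a \<bullet> b)"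
    using assms by (simp add: inner_diff_left inner_diff_right inner_commute field_simps)
  finally show ?thesis using assms by (simp add: zero_le_mult_iff)
qed

lemma ip_cross3_self: "ip \<Omega> (\<lambda>x. cross3 (a x) (w x)) w = 0"
  unfolding ip_def by (simp add: dot_cross_self)

lemma llg_energy_step:
  assumes m: "tet_mesh T \<Omega>" and "open \<Omega>" "bounded \<Omega>" and "0 < \<alpha>" "0 < k"
    and mi: "mi \<in> S1 T \<Omega>" and w: "w \<in> Kh T \<Omega> hm" and F: "bounded_measurable_on \<Omega> F"
    and eqn: "\<forall>\<phi>\<in>Kh T \<Omega> hm. \<alpha> * ip \<Omega> w \<phi> + ip \<Omega> (\<lambda>x. cross3 (hm x) (w x)) \<phi>
      + k / 2 * gip \<Omega> w \<phi> = - gip \<Omega> mi \<phi> + ip \<Omega> F \<phi>"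
  shows "gip \<Omega> (\<lambda>x. mi x + k *\<^sub>R w x) (\<lambda>x. mi x + k *\<^sub>R w x) + k * \<alpha> * ip \<Omega> w w
    \<le> gip \<Omega> mi mi + k / \<alpha> * ip \<Omega> F F"
proof -
  have wS: "w \<in> S1 T \<Omega>" using w by (simp add: Kh_def)
  have tested: "gip \<Omega> mi w = ip \<Omega> F w - \<alpha> * ip \<Omega> w w - k / 2 * gip \<Omega> w w"
    using eqn[rule_format, OF w] ip_cross3_self[of \<Omega> hm w] by simp
  have wb: "bounded_measurable_on \<Omega> w" by (rule bounded_measurable_on_S1[OF wS assms(2,3)])
  define c1 c2 where "c1 = \<alpha> / 2" and "c2 = 1 / (2 * \<alpha>)"
  have iw: "set_integrable lborel \<Omega> (\<lambda>x. w x \<bullet> w x)"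
    and iF: "set_integrable lborel \<Omega> (\<lambda>x. F x \<bullet> F x)"
    and iFw: "set_integrable lborel \<Omega> (\<lambda>x. F x \<bullet> w x)"
    using set_integrable_inner[OF assms(2,3)] F wb by auto
  have "ip \<Omega> F w \<le> (LINT x:\<Omega>|lborel. c1 * (w x \<bullet> w x) + c2 * (F x \<bullet> F x))"
    unfolding ip_def c1_def c2_def using iw iF iFw \<open>0 < \<alpha>\<close>
    by (intro set_integral_mono inner_le_weighted_squares) auto
  also have "\<dots> = c1 * ip \<Omega> w w + c2 * ip \<Omega> F F"
    unfolding ip_def using iw iF by simp
  finally have young: "ip \<Omega> F w \<le> \<alpha> / 2 * ip \<Omega> w w + 1 / (2 * \<alpha>) * ip \<Omega> F F"
    unfolding c1_def c2_def .
  have "gip \<Omega> (\<lambda>x. mi x + k *\<^sub>R w x) (\<lambda>x. mi x + k *\<^sub>R w x) + k * \<alpha> * ip \<Omega> w w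
      = gip \<Omega> mi mi + 2 * k * ip \<Omega> F w - k * \<alpha> * ip \<Omega> w w"
    unfolding gip_add_scaled[OF m assms(2,3) mi wS] tested
    by (simp add: power2_eq_square field_simps)
  also have "\<dots> \<le> gip \<Omega> mi mi + 2 * k * (\<alpha> / 2 * ip \<Omega> w w + 1 / (2 * \<alpha>) * ip \<Omega> F F)
      - k * \<alpha> * ip \<Omega> w w"
    using young \<open>0 < k\<close> by simp
  also have "\<dots> = gip \<Omega> mi mi + k / \<alpha> * ip \<Omega> F F"
    using \<open>0 < \<alpha>\<close> by (simp add: field_simps)
  finally show ?thesis .
qed

lemma norm_outer: "norm (outer a b) = norm a * norm b"
proof -
  have "norm (outer a b) = L2_set (\<lambda>i. norm (outer a b $ i)) UNIV"
    by (rule norm_vec_def)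
  also have "\<dots> = L2_set (\<lambda>i. norm (a $ i) * norm b) UNIV"
  proof -
    have "outer a b $ i = a $ i *\<^sub>R b" for i by (simp add: outer_def vec_eq_iff)
    then show ?thesis by simp
  qed
  also have "\<dots> = norm a * norm b"
    by (simp add: L2_set_left_distrib norm_vec_def[of a])
  finally show ?thesis .
qed

lemma norm_matrix_vector_mult_le:
  fixes A :: "real^'n^'m"
  shows "norm (A *v x) \<le> norm A * norm x"
proof -
  have "norm (A *v x) = L2_set (\<lambda>i. norm ((A *v x) $ i)) UNIV"
    by (rule norm_vec_def)
  also have "\<dots> = L2_set (\<lambda>i. \<bar>A $ i \<bullet> x\<bar>) UNIV"
    by (simp add: matrix_vector_mult_def inner_vec_def mult.commute)
  also have "\<dots> \<le> L2_set (\<lambda>i. norm (A $ i) * norm x) UNIV"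
    by (intro L2_set_mono Cauchy_Schwarz_ineq2) auto
  also have "\<dots> = norm A * norm x"
    by (simp add: L2_set_left_distrib norm_vec_def[of A])
  finally show ?thesis .
qed

lemma linear_ddot: "linear (ddot T)"
  by (intro linearI) (simp_all add: ddot_def vec_eq_iff sum.distrib sum_distrib_left algebra_simps)

lemma mstress_growth:
  obtains K where "0 \<le> K"
    and "\<And>u m x. norm (m x) \<le> 1 \<Longrightarrow> norm (mstress Z C u m x) \<le> K * (norm (symeps u x) + 1)"
proof -
  obtain Bt where Bt: "0 < Bt" "\<And>A. norm (ddot (ttrans Z) A) \<le> Bt * norm A"
    using linear_bounded_pos[OF linear_ddot[of "ttrans Z"]] by blast
  obtain Bc where Bc: "0 < Bc" "\<And>A. norm (ddot C A) \<le> Bc * norm A"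
    using linear_bounded_pos[OF linear_ddot[of C]] by blast
  obtain Bz where Bz: "0 < Bz" "\<And>A. norm (ddot Z A) \<le> Bz * norm A"
    using linear_bounded_pos[OF linear_ddot[of Z]] by blast
  have "norm (mstress Z C u m x) \<le> (2 * Bt * Bc * (1 + Bz)) * (norm (symeps u x) + 1)"
    if m: "norm (m x) \<le> 1" for u m x
  proof -
    have "norm (outer (m x) (m x)) \<le> 1"
      using m by (simp add: norm_outer mult_le_one)
    then have "norm (eps_m Z m x) \<le> Bz"
      unfolding eps_m_def using Bz mult_left_le[of _ Bz] by (meson order_trans less_imp_le)
    then have "norm (symeps u x - eps_m Z m x) \<le> (1 + Bz) * (norm (symeps u x) + 1)"
      using norm_triangle_ineq4[of "symeps u x" "eps_m Z m x"] Bz(1)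
      by (simp add: algebra_simps) (smt (verit) mult_nonneg_nonneg norm_ge_zero)
    then have "norm (sigma Z C u m x) \<le> Bc * ((1 + Bz) * (norm (symeps u x) + 1))"
      unfolding sigma_def
      by (meson Bc mult_left_mono order_trans less_imp_le)
    moreover have "norm (mstress Z C u m x) \<le> 2 * Bt * norm (sigma Z C u m x)"
    proof -
      have "norm (mstress Z C u m x) \<le> norm (2 *\<^sub>R ddot (ttrans Z) (sigma Z C u m x)) * norm (m x)"
        unfolding mstress_def by (rule norm_matrix_vector_mult_le)
      also have "\<dots> \<le> 2 * norm (ddot (ttrans Z) (sigma Z C u m x))"
        using m by (simp add: mult_left_le)
      finally show ?thesis
        using Bt(2)[of "sigma Z C u m x"] by simp
    qed
    ultimately show ?thesis
      using Bt(1) by (smt (verit) mult_left_mono mult.assoc)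
  qed
  moreover have "0 \<le> 2 * Bt * Bc * (1 + Bz)" using Bt Bc Bz by simp
  ultimately show ?thesis using that by blast
qed

lemma ip_mstress_le:
  assumes m: "tet_mesh T \<Omega>" and "open \<Omega>" "bounded \<Omega>" and u: "u \<in> S1 T \<Omega>" and P: "P \<in> S1 T \<Omega>"
    and P1: "\<And>x. norm (P x) \<le> 1" and "0 \<le> K"
    and growth: "\<And>u m x. norm (m x) \<le> 1 \<Longrightarrow> norm (mstress Z C u m x) \<le> K * (norm (symeps u x) + 1)"
  shows "ip \<Omega> (mstress Z C u P) (mstress Z C u P)
    \<le> 2 * K\<^sup>2 * (measure lborel \<Omega> + mip \<Omega> (symeps u) (symeps u))"
proof -
  have pointwise: "mstress Z C u P x \<bullet> mstress Z C u P x \<le> 2 * K\<^sup>2 * (1 + symeps u x \<bullet> symeps u x)"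
    for x
  proof -
    define n where "n = norm (symeps u x)"
    have "mstress Z C u P x \<bullet> mstress Z C u P x \<le> (K * (n + 1))\<^sup>2"
      unfolding n_def power2_norm_eq_inner[symmetric]
      using growth[of P x u, OF P1] by (intro power_mono) auto
    also have "\<dots> \<le> K\<^sup>2 * (2 * (1 + n\<^sup>2))"
    proof -
      have "0 \<le> (n - 1)\<^sup>2" by simp
      then have "(n + 1)\<^sup>2 \<le> 2 * (1 + n\<^sup>2)" by (simp add: power2_eq_square algebra_simps)
      then show ?thesis by (simp add: power_mult_distrib mult_left_mono)
    qed
    finally show ?thesis by (simp add: n_def power2_norm_eq_inner algebra_simps)
  qed
  have ims: "set_integrable lborel \<Omega> (\<lambda>x. mstress Z C u P x \<bullet> mstress Z C u P x)"
    using assms(2,3) bounded_measurable_on_mstress[OF m assms(2,3) u P]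
    by (intro set_integrable_inner)
  have ie: "set_integrable lborel \<Omega> (\<lambda>x. symeps u x \<bullet> symeps u x)"
    using assms(2,3) bounded_measurable_on_symeps[OF m assms(2) u] by (intro set_integrable_inner)
  have i1: "set_integrable lborel \<Omega> (\<lambda>x. 1 :: real)"
    using assms(2,3) by (intro bounded_measurable_on_set_integrable bounded_measurable_on_const)
  have "ip \<Omega> (mstress Z C u P) (mstress Z C u P)
      \<le> (LINT x:\<Omega>|lborel. 2 * K\<^sup>2 * (1 + symeps u x \<bullet> symeps u x))"
    unfolding ip_def using ims ie i1 pointwise by (intro set_integral_mono) auto
  also have "\<dots> = 2 * K\<^sup>2 * ((LINT x:\<Omega>|lborel. 1) + mip \<Omega> (symeps u) (symeps u))"
    unfolding mip_eq_inner using ie i1 by simp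
  also have "(LINT x:\<Omega>|lborel. 1) = measure lborel \<Omega>"
    using set_integral_const[of \<Omega> lborel "1::real"] emeasure_bounded_finite[OF \<open>bounded \<Omega>\<close>]
      \<open>open \<Omega>\<close> by simp
  finally show ?thesis .
qed

lemma inner_extrapolation_le:
  fixes a b :: "'a::real_inner"
  shows "((3/2) *\<^sub>R a - (1/2) *\<^sub>R b) \<bullet> ((3/2) *\<^sub>R a - (1/2) *\<^sub>R b) \<le> 5/2 * (a \<bullet> a + b \<bullet> b)"
proof -
  have "0 \<le> ((1/2) *\<^sub>R a + (3/2) *\<^sub>R b) \<bullet> ((1/2) *\<^sub>R a + (3/2) *\<^sub>R b)" by simp
  then show ?thesis
    by (simp add: inner_add_left inner_add_right inner_diff_left inner_diff_right inner_commute
        algebra_simps)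
qed

lemma symeps_S1_lincomb_AE:
  assumes "tet_mesh T \<Omega>" "f \<in> S1 T \<Omega>" "g \<in> S1 T \<Omega>"
  shows "AE x in lborel. x \<in> \<Omega> \<longrightarrow>
    symeps (\<lambda>y. a *\<^sub>R f y + b *\<^sub>R g y) x = a *\<^sub>R symeps f x + b *\<^sub>R symeps g x"
  using grad_S1_lincomb_AE[OF assms, of a b]
  by (auto elim!: eventually_mono simp: symeps_def transpose_def vec_eq_iff algebra_simps
      add_divide_distrib)

lemma hat_S1: "f i \<in> S1 T \<Omega> \<Longrightarrow> f (i - 1) \<in> S1 T \<Omega> \<Longrightarrow> hat f i \<in> S1 T \<Omega>"
  using S1_lincomb[of "f i" T \<Omega> "f (i - 1)" "3/2" "- 1/2"] by (simp add: hat_def)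

lemma mip_symeps_hat_le:
  assumes m: "tet_mesh T \<Omega>" and "open \<Omega>" "bounded \<Omega>"
    and u: "u i \<in> S1 T \<Omega>" "u (i - 1) \<in> S1 T \<Omega>"
  shows "mip \<Omega> (symeps (hat u i)) (symeps (hat u i))
    \<le> 5/2 * (mip \<Omega> (symeps (u i)) (symeps (u i)) + mip \<Omega> (symeps (u (i - 1))) (symeps (u (i - 1))))"
proof -
  have hat: "hat u i = (\<lambda>x. (3/2) *\<^sub>R u i x + (- 1/2) *\<^sub>R u (i - 1) x)"
    by (simp add: hat_def fun_eq_iff)
  have "hat u i \<in> S1 T \<Omega>" by (rule hat_S1[OF u])
  have int: "set_integrable lborel \<Omega> (\<lambda>x. symeps w x \<bullet> symeps w x)" if "w \<in> S1 T \<Omega>" for w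
    using assms(2,3) bounded_measurable_on_symeps[OF m assms(2) that] by (intro set_integrable_inner)
  have "AE x\<in>\<Omega> in lborel. symeps (hat u i) x \<bullet> symeps (hat u i) x
      \<le> 5/2 * (symeps (u i) x \<bullet> symeps (u i) x + symeps (u (i - 1)) x \<bullet> symeps (u (i - 1)) x)"
    using symeps_S1_lincomb_AE[OF m u, of "3/2" "- 1/2"] unfolding hat[symmetric]
    by (auto elim!: eventually_mono simp: inner_extrapolation_le[simplified])
  then have "mip \<Omega> (symeps (hat u i)) (symeps (hat u i)) \<le> (LINT x:\<Omega>|lborel.
      5/2 * (symeps (u i) x \<bullet> symeps (u i) x + symeps (u (i - 1)) x \<bullet> symeps (u (i - 1)) x))"
    unfolding mip_eq_inner
    using int[OF \<open>hat u i \<in> S1 T \<Omega>\<close>] int[OF u(1)] int[OF u(2)] by (intro set_integral_mono_AE) auto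
  then show ?thesis unfolding mip_eq_inner using int[OF u(1)] int[OF u(2)] by simp
qed

lemma scheme_S1:
  assumes sch: "scheme \<Omega> \<Gamma>D T \<alpha> \<beta> Z C k N m v u ud0" and "i \<le> N"
  shows "m i \<in> S1 T \<Omega> \<and> u i \<in> S1 T \<Omega>"
  using \<open>i \<le> N\<close>
proof (induction i)
  case 0
  then show ?case using sch by (simp add: scheme_def Mh0_def S1D_def)
next
  case (Suc i)
  have step: "(\<lambda>x. m i x + k *\<^sub>R w x) \<in> S1 T \<Omega>" if "w \<in> Kh T \<Omega> mh" for w mh
    using S1_lincomb[of "m i" T \<Omega> w 1 k] Suc that by (simp add: Kh_def)
  show ?case
  proof (cases "i = 0")
    case True
    then show ?thesis using sch step[of "v 1" "m 0"] by (simp add: scheme_def S1D_def)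
  next
    case False
    then show ?thesis
      using sch step[of "v (i+1)" "hat m i"] Suc.prems by (simp add: scheme_def S1D_def)
  qed
qed

lemma ip_mstress_hat_le:
  assumes m: "tet_mesh T \<Omega>" and "open \<Omega>" "bounded \<Omega>"
    and u: "u i \<in> S1 T \<Omega>" "u (i - 1) \<in> S1 T \<Omega>" and P: "P \<in> S1 T \<Omega>" "\<And>x. norm (P x) \<le> 1"
    and K: "0 \<le> K"
      "\<And>u m x. norm (m x) \<le> 1 \<Longrightarrow> norm (mstress Z C u m x) \<le> K * (norm (symeps u x) + 1)"
  shows "ip \<Omega> (mstress Z C (hat u i) P) (mstress Z C (hat u i) P)
    \<le> 5 * K\<^sup>2 * (1 + measure lborel \<Omega>)
      * (1 + mip \<Omega> (symeps (u i)) (symeps (u i)) + mip \<Omega> (symeps (u (i - 1))) (symeps (u (i - 1))))"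
proof -
  define \<mu> where "\<mu> = measure lborel \<Omega>"
  define e where "e = mip \<Omega> (symeps (u i)) (symeps (u i)) + mip \<Omega> (symeps (u (i - 1))) (symeps (u (i - 1)))"
  have "ip \<Omega> (mstress Z C (hat u i) P) (mstress Z C (hat u i) P)
      \<le> 2 * K\<^sup>2 * (\<mu> + mip \<Omega> (symeps (hat u i)) (symeps (hat u i)))"
    unfolding \<mu>_def by (rule ip_mstress_le[OF m assms(2,3) hat_S1[OF u] P K])
  also have "\<dots> \<le> 2 * K\<^sup>2 * (\<mu> + 5/2 * e)"
    unfolding e_def using mip_symeps_hat_le[OF m assms(2,3) u]
    by (intro mult_left_mono add_left_mono) auto
  also have "\<dots> \<le> 5 * K\<^sup>2 * ((1 + \<mu>) * (1 + e))"
  proof -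
    have "0 \<le> \<mu>" "0 \<le> e" by (simp_all add: \<mu>_def e_def mip_nonneg)
    then have "2 * (\<mu> + 5/2 * e) \<le> 5 * ((1 + \<mu>) * (1 + e))"
      by (simp add: algebra_simps)
    from mult_left_mono[OF this zero_le_power2[of K]] show ?thesis by (simp add: algebra_simps)
  qed
  finally show ?thesis unfolding \<mu>_def e_def by (simp only: add.assoc mult.assoc)
qed

lemma scheme_energy_step:
  assumes m: "tet_mesh T \<Omega>" and "open \<Omega>" "bounded \<Omega>" "0 < \<alpha>" "0 < k"
    and K: "0 \<le> K"
      "\<And>u m x. norm (m x) \<le> 1 \<Longrightarrow> norm (mstress Z C u m x) \<le> K * (norm (symeps u x) + 1)"
    and sch: "scheme \<Omega> \<Gamma>D T \<alpha> \<beta> Z C k N m v u ud0" and i: "1 \<le> i" "i \<le> N - 1"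
  shows "gip \<Omega> (m (i+1)) (m (i+1)) + k * \<alpha> * ip \<Omega> (v (i+1)) (v (i+1))
    \<le> gip \<Omega> (m i) (m i) + k / \<alpha> * (5 * K\<^sup>2 * (1 + measure lborel \<Omega>))
      * (1 + mip \<Omega> (symeps (u i)) (symeps (u i)) + mip \<Omega> (symeps (u (i - 1))) (symeps (u (i - 1))))"
proof -
  define P where "P = Pih T \<Omega> (hat m i)"
  define F where "F = mstress Z C (hat u i) P"
  have llg: "v (i+1) \<in> Kh T \<Omega> (hat m i)"
    "\<forall>\<phi>\<in>Kh T \<Omega> (hat m i). \<alpha> * ip \<Omega> (v (i+1)) \<phi> + ip \<Omega> (\<lambda>x. cross3 (hat m i x) (v (i+1) x)) \<phi>
       + k / 2 * gip \<Omega> (v (i+1)) \<phi> = - gip \<Omega> (m i) \<phi> + ip \<Omega> F \<phi>"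
    "m (i+1) = (\<lambda>x. m i x + k *\<^sub>R v (i+1) x)"
    using sch i unfolding scheme_def F_def P_def by blast+
  have S1: "m i \<in> S1 T \<Omega>" "u i \<in> S1 T \<Omega>" "u (i - 1) \<in> S1 T \<Omega>"
    using scheme_S1[OF sch] i by auto
  have P: "P \<in> S1 T \<Omega>" "\<And>x. norm (P x) \<le> 1"
    unfolding P_def using Pih_S1(1)[OF m] Pih_norm_le_1[OF m] by auto
  have "k / \<alpha> * ip \<Omega> F F \<le> k / \<alpha> * (5 * K\<^sup>2 * (1 + measure lborel \<Omega>)
      * (1 + mip \<Omega> (symeps (u i)) (symeps (u i)) + mip \<Omega> (symeps (u (i - 1))) (symeps (u (i - 1)))))"
    unfolding F_def using ip_mstress_hat_le[OF m assms(2,3) S1(2,3) P K] \<open>0 < k\<close> \<open>0 < \<alpha>\<close>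
    by (intro mult_left_mono) auto
  moreover have "bounded_measurable_on \<Omega> F"
    unfolding F_def by (rule bounded_measurable_on_mstress[OF m assms(2,3) hat_S1[OF S1(2,3)] P(1)])
  note llg_energy_step[OF m assms(2-5) S1(1) llg(1) this llg(2)]
  ultimately show ?thesis unfolding llg(3) mult.assoc by linarith
qed

lemma discrete_energy_telescope:
  fixes a E e :: "nat \<Rightarrow> real"
  assumes "0 \<le> Y" "\<And>i. 0 \<le> e i"
    and "\<forall>i\<in>{1..n}. a (i+1) + X * E (i+1) \<le> a i + Y * (1 + e i + e (i - 1))"
  shows "a (n+1) + X * (\<Sum>i=1..n. E (i+1)) + Y * (1 + e n) \<le> a 1 + 2 * Y * (\<Sum>i=0..n. 1 + e i)"
  using assms(3)
proof (induction n)
  case 0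
  then show ?case using assms(1) assms(2)[of 0] by simp
next
  case (Suc n)
  have IH: "a (n+1) + X * (\<Sum>i=1..n. E (i+1)) + Y * (1 + e n) \<le> a 1 + 2 * Y * (\<Sum>i=0..n. 1 + e i)"
    using Suc by simp
  have step: "a (n+2) + X * E (n+2) \<le> a (n+1) + Y * (1 + e (n+1) + e n)"
    using Suc.prems[rule_format, of "Suc n"] by simp
  have "0 \<le> Y * e (Suc n)" using assms(1,2) by simp
  then show ?case using IH step assms(1) by (simp add: algebra_simps)
qed

lemma discrete_energy_bound:
  fixes a E e :: "nat \<Rightarrow> real"
  assumes "0 < \<alpha>" "0 < k" "0 \<le> Kq" and nonneg: "\<And>i. 0 \<le> a i" "\<And>i. 0 \<le> E i" "\<And>i. 0 \<le> e i"
    and step: "\<forall>i\<in>{1..n}. a (i+1) + k * \<alpha> * E (i+1) \<le> a i + k / \<alpha> * Kq * (1 + e i + e (i - 1))"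
  shows "a (n+1) + k * (\<Sum>i=1..n. E (i+1))
    \<le> (1 + 1 / \<alpha>) * (1 + 2 * Kq / \<alpha>) * (a 1 + k * (\<Sum>i=0..n. 1 + e i))"
proof -
  define SE S where "SE = (\<Sum>i=1..n. E (i+1))" and "S = (\<Sum>i=0..n. 1 + e i)"
  have "0 \<le> SE" "0 \<le> S" unfolding SE_def S_def using nonneg by (auto intro: sum_nonneg add_nonneg_nonneg)
  have Y: "0 \<le> k / \<alpha> * Kq" using assms(1-3) by simp
  have "a (n+1) + k * \<alpha> * SE \<le> a 1 + 2 * (k / \<alpha> * Kq) * S"
  proof -
    have "0 \<le> 1 + e n" using nonneg(3)[of n] by simp
    with Y have "0 \<le> k / \<alpha> * Kq * (1 + e n)" by (rule mult_nonneg_nonneg)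
    then show ?thesis
      using discrete_energy_telescope[OF Y nonneg(3) step] unfolding SE_def S_def by linarith
  qed
  then have "a (n+1) + k * \<alpha> * SE \<le> a 1 + 2 * Kq / \<alpha> * (k * S)" by (simp add: field_simps)
  moreover have "a (n+1) + k * SE \<le> (1 + 1 / \<alpha>) * (a (n+1) + k * \<alpha> * SE)"
    using assms(1,2) nonneg(1)[of "n+1"] \<open>0 \<le> SE\<close> by (simp add: field_simps)
  moreover have "a 1 + 2 * Kq / \<alpha> * (k * S) \<le> (1 + 2 * Kq / \<alpha>) * (a 1 + k * S)"
    using assms nonneg(1)[of 1] \<open>0 \<le> S\<close> by (simp add: field_simps)
  ultimately have "a (n+1) + k * SE \<le> (1 + 1 / \<alpha>) * ((1 + 2 * Kq / \<alpha>) * (a 1 + k * S))"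
    using assms(1) by (smt (verit) mult_left_mono divide_nonneg_pos)
  then show ?thesis unfolding SE_def S_def by (simp add: mult.assoc)
qed

lemma scheme_energy_bound:
  assumes m: "tet_mesh T \<Omega>" and "open \<Omega>" "bounded \<Omega>" "0 < \<alpha>" "0 < k"
    and K: "0 \<le> K"
      "\<And>u m x. norm (m x) \<le> 1 \<Longrightarrow> norm (mstress Z C u m x) \<le> K * (norm (symeps u x) + 1)"
    and sch: "scheme \<Omega> \<Gamma>D T \<alpha> \<beta> Z C k N m v u ud0" and j: "2 \<le> j" "j \<le> N"
  shows "gip \<Omega> (m j) (m j) + k * (\<Sum>i = 1..j-1. ip \<Omega> (v (i+1)) (v (i+1)))
    \<le> (1 + 1 / \<alpha>) * (1 + 2 * (5 * K\<^sup>2 * (1 + measure lborel \<Omega>)) / \<alpha>)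
      * (gip \<Omega> (m 1) (m 1) + k * (\<Sum>i = 0..j-1. 1 + mip \<Omega> (symeps (u i)) (symeps (u i))))"
proof -
  have "\<forall>i\<in>{1..j - 1}. gip \<Omega> (m (i+1)) (m (i+1)) + k * \<alpha> * ip \<Omega> (v (i+1)) (v (i+1))
      \<le> gip \<Omega> (m i) (m i) + k / \<alpha> * (5 * K\<^sup>2 * (1 + measure lborel \<Omega>))
        * (1 + mip \<Omega> (symeps (u i)) (symeps (u i)) + mip \<Omega> (symeps (u (i - 1))) (symeps (u (i - 1))))"
    using scheme_energy_step[OF m assms(2-5) K sch] j by auto
  from discrete_energy_bound[OF \<open>0 < \<alpha>\<close> \<open>0 < k\<close> _ gip_nonneg ip_nonneg mip_nonneg this]
  show ?thesis using j by simp
qed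

theorem proposition4p2:
  fixes \<Omega> \<Gamma>D \<Gamma>N :: "(real^3) set" and \<alpha> \<beta> T :: real and Z C :: "3 \<Rightarrow> 3 \<Rightarrow> 3 \<Rightarrow> 3 \<Rightarrow> real"
  assumes "lipschitz_domain \<Omega>" and "polyhedral_domain \<Omega>" and "boundary_split \<Omega> \<Gamma>D \<Gamma>N"
    and "minor_sym Z" and "minor_sym C" and "major_sym C" and "unif_pos_def C"
    and "\<alpha> > 0" and "0 \<le> \<beta>" and "\<beta> \<le> 1/2" and "T > 0"
  shows "\<exists>c>0. \<forall>\<T> (N::nat) m v u ud0 j.
     tet_mesh \<T> \<Omega> \<and> N \<ge> 1 \<and>
     scheme \<Omega> \<Gamma>D \<T> \<alpha> \<beta> Z C (T / real N) N m v u ud0 \<and>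
     (\<forall>i. 1 \<le> i \<and> i \<le> N - 1 \<longrightarrow> (\<forall>z\<in>nodes \<T>. hat m i z \<noteq> 0)) \<and>
     2 \<le> j \<and> j \<le> N \<longrightarrow>
       gip \<Omega> (m j) (m j) + (T / real N) * (\<Sum>i = 1..j-1. ip \<Omega> (v (i+1)) (v (i+1)))
       \<le> c * (gip \<Omega> (m 1) (m 1)
              + (T / real N) * (\<Sum>i = 0..j-1. 1 + mip \<Omega> (symeps (u i)) (symeps (u i))))"
proof -
  have "open \<Omega>" "bounded \<Omega>" using assms(1) by (auto simp: lipschitz_domain_def)
  obtain K where K: "0 \<le> K"
    "\<And>u m x. norm (m x) \<le> 1 \<Longrightarrow> norm (mstress Z C u m x) \<le> K * (norm (symeps u x) + 1)"
    using mstress_growth[of Z C] by blast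
  show ?thesis
  proof (intro exI conjI allI impI)
    show "0 < (1 + 1 / \<alpha>) * (1 + 2 * (5 * K\<^sup>2 * (1 + measure lborel \<Omega>)) / \<alpha>)"
      using \<open>0 < \<alpha>\<close> by (simp add: add_pos_nonneg)
  qed (elim conjE, rule scheme_energy_bound[OF _ \<open>open \<Omega>\<close> \<open>bounded \<Omega>\<close> \<open>0 < \<alpha>\<close> _ K],
      auto simp: \<open>T > 0\<close>)
qed

end
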